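(* Let $G$ be a circle of circumference $1$, let $\mathbf{x}\in G^n$ be such that the agents are not on one semicircle, and let $i\in N$, $x_i'\in G$ be such that the agents in $\mathbf{x}'=(x_i',\mathbf{x}_{-i})$ are not on one semicircle. Then $\mathrm{cost}(\mathrm{rc}(\mathbf{x}),x_i)\le\mathrm{cost}(\mathrm{rc}(\mathbf{x}'),x_i)$.
   Context: $d(x,y)$ is the shorter-arc length; $\hat x$ the antipode of $x$; $\mathrm{cost}(P,x_i)=\mathbb{E}_{y\sim P}[d(x_i,y)]$. Agents are on one semicircle if all locations lie in some closed arc of length $1/2$. RC: the antipodal points $\hat{x}_1,\dots,\hat{x}_n$ partition $G$ into arcs between cyclically consecutive antipodal points; $\mathrm{rc}$ returns the midpoint of each such arc with probability equal to its length. *)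

theory Defs
  imports "HOL-Probability.Probability"
begin

text \<open>The circle G of circumference 1 is represented by the reals modulo 1:
  a real number t denotes the point frac t in [0,1).\<close>

definition circ_dist :: "real \<Rightarrow> real \<Rightarrow> real" where
  "circ_dist x y = min (frac (x - y)) (1 - frac (x - y))"

definition antipode :: "real \<Rightarrow> real" where
  "antipode x = frac (x + 1/2)"

definition on_semicircle :: "nat \<Rightarrow> (nat \<Rightarrow> real) \<Rightarrow> bool" where
  "on_semicircle n x \<longleftrightarrow> (\<exists>c. \<forall>i<n. frac (x i - c) \<le> 1/2)"

text \<open>Distinct antipodal points in increasing order in [0,1), closed up cyclically
  by appending the first one plus 1.\<close>
definition rc_points :: "nat \<Rightarrow> (nat \<Rightarrow> real) \<Rightarrow> real list" where
  "rc_points n x = (let L = sorted_list_of_set ((\<lambda>i. antipode (x i)) ` {..<n})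
                    in L @ [hd L + 1])"

text \<open>Arcs between cyclically consecutive antipodal points:
  (midpoint, length) pairs.\<close>
definition rc_arcs :: "nat \<Rightarrow> (nat \<Rightarrow> real) \<Rightarrow> (real \<times> real) list" where
  "rc_arcs n x = (let P = rc_points n x in
     map (\<lambda>j. (frac ((P ! j + P ! (j+1)) / 2), P ! (j+1) - P ! j)) [0..<length P - 1])"

text \<open>The RC mechanism: midpoint of each arc with probability equal to its length.\<close>
definition rc :: "nat \<Rightarrow> (nat \<Rightarrow> real) \<Rightarrow> real pmf" where
  "rc n x = pmf_of_list (rc_arcs n x)"

definition cost :: "real pmf \<Rightarrow> real \<Rightarrow> real" where
  "cost P z = measure_pmf.expectation P (\<lambda>y. circ_dist z y)"

end

theory Submission
  imports Defs
begin

(* Write tent w for the distance from w to the nearest integer, so that the circle distance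
   from z to the point w is tent (w - z). For an arc [u, v] of the circle, put
     defect u v = (v - u) * tent (midpoint) - (integral of tent over [u, v]),
   with coordinates relative to the agent. Since the arcs of RC cover the circle once and the
   distances integrate to 1/4, the cost of RC for an agent at z is 1/4 plus the sum of the
   defects of all arcs (cost_formula). The tent function is convex near z and concave near the
   antipode of z, linear elsewhere; hence the defect of a short arc is negative iff the arc
   contains z, positive iff it contains the antipode of z, and zero otherwise. When agent i
   reports truthfully, the antipode of z = x i is an arc endpoint, so all defects are <= 0
   and the arc around z contributes -d^2, d the distance from z to its nearer end. After a
   deviation the other defects are >= 0, and the arc around z is contained in the truthful
   one because its ends, being closer than 1/2 to z, are antipodes of other agents
   (defect_sum_mono). *)

definition tent :: "real \<Rightarrow> real" where
  "tent w = min (frac w) (1 - frac w)"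

text \<open>The integral of the tent function over [0, t], for t in [0, 1].\<close>

definition tent_prim_unit :: "real \<Rightarrow> real" where
  "tent_prim_unit t = (if t \<le> 1/2 then t\<^sup>2 / 2 else 1/4 - (1 - t)\<^sup>2 / 2)"

text \<open>An antiderivative of the tent function on the whole real line (each unit interval
  contributes 1/4).\<close>

definition tent_prim :: "real \<Rightarrow> real" where
  "tent_prim w = of_int \<lfloor>w\<rfloor> / 4 + tent_prim_unit (frac w)"

text \<open>Since the distances integrate
  to 1/4 over the whole circle, the cost of RC is 1/4 plus the sum of the arc defects.\<close>

definition defect :: "real \<Rightarrow> real \<Rightarrow> real" where
  "defect u v = (v - u) * tent ((u + v) / 2) - (tent_prim v - tent_prim u)"

definition inner_dist :: "real \<Rightarrow> real \<Rightarrow> real \<Rightarrow> real" where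
  "inner_dist u v c = min (c - u) (v - c)"

lemma tent_shift: "tent (w + of_int k) = tent w"
  by (simp add: tent_def)

lemma tent_prim_shift: "tent_prim (w + of_int k) = tent_prim w + of_int k / 4"
  by (simp add: tent_prim_def add_divide_distrib)

lemma defect_shift: "defect (u + of_int k) (v + of_int k) = defect u v"
proof -
  have "(u + of_int k + (v + of_int k)) / 2 = (u + v) / 2 + of_int k" by simp
  then show ?thesis
    by (simp only: defect_def tent_prim_shift tent_shift) simp
qed

lemma frac_floor_eq:
  assumes "of_int m \<le> x" "x < of_int m + 1"
  shows "frac x = x - of_int m" "\<lfloor>x\<rfloor> = m"
  using assms by (simp_all add: frac_def floor_unique)

lemma tent_near_one:
  assumes "1/2 \<le> w" "w \<le> 3/2"
  shows "tent w = \<bar>w - 1\<bar>"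
proof (cases "w < 1")
  case True
  then show ?thesis using frac_floor_eq[of 0 w] assms by (simp add: tent_def)
next
  case False
  then show ?thesis using frac_floor_eq[of 1 w] assms by (simp add: tent_def)
qed

lemma tent_unit:
  assumes "0 \<le> w" "w < 1"
  shows "tent w = min w (1 - w)"
  using frac_floor_eq[of 0 w] assms by (simp add: tent_def)

text \<open>An arc shorter than 1/2 around the integer 1 sees the convex corner of the tent function:
  the defect is minus the square of the distance from 1 to the nearer end.\<close>

lemma defect_straddle_one:
  assumes "1/2 < u" "u < 1" "1 < v" "v - u < 1/2"
  shows "defect u v = - (inner_dist u v 1)\<^sup>2"
proof -
  have u: "frac u = u" "\<lfloor>u\<rfloor> = 0" using frac_floor_eq[of 0 u] assms by auto
  have v: "frac v = v - 1" "\<lfloor>v\<rfloor> = 1" using frac_floor_eq[of 1 v] assms by auto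
  have "tent ((u + v) / 2) = \<bar>(u + v) / 2 - 1\<bar>" using assms by (intro tent_near_one) auto
  then have "defect u v = (v - u) * \<bar>(u + v) / 2 - 1\<bar> - ((v - 1)\<^sup>2 / 2 + (1 - u)\<^sup>2 / 2)"
    using assms by (simp add: defect_def tent_prim_def tent_prim_unit_def u v)
  then show ?thesis
    by (cases "1 - u \<le> v - 1")
      (simp_all add: inner_dist_def abs_if min_def power2_eq_square field_simps)
qed

text \<open>Inside one unit interval the defect is zero except at the concave corner 1/2, where it
  is positive.\<close>

lemma defect_unit_interval:
  assumes "0 \<le> u" "u < v" "v \<le> 1"
  shows "defect u v = (if u < 1/2 \<and> 1/2 < v then (inner_dist u v (1/2))\<^sup>2 else 0)"
proof -
  have u: "tent_prim u = tent_prim_unit u"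
    using frac_floor_eq[of 0 u] assms by (simp add: tent_prim_def)
  have v: "tent_prim v = tent_prim_unit v"
    using frac_floor_eq[of 0 v] assms by (cases "v = 1") (simp_all add: tent_prim_def tent_prim_unit_def)
  have "tent ((u + v) / 2) = min ((u + v) / 2) (1 - (u + v) / 2)"
    using assms by (intro tent_unit) auto
  then have eq: "defect u v = (v - u) * min ((u + v) / 2) (1 - (u + v) / 2) -
      (tent_prim_unit v - tent_prim_unit u)"
    by (simp add: defect_def u v)
  have lo: "tent_prim_unit t = t\<^sup>2 / 2" if "t \<le> 1/2" for t
    using that by (simp add: tent_prim_unit_def)
  have hi: "tent_prim_unit t = 1/4 - (1 - t)\<^sup>2 / 2" if "1/2 \<le> t" for t
  proof (cases "t = 1/2")
    case True
    show ?thesis unfolding True by (simp add: tent_prim_unit_def power2_eq_square)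
  qed (use that in \<open>simp add: tent_prim_unit_def\<close>)
  consider (left) "v \<le> 1/2" | (right) "1/2 \<le> u"
    | (mid_left) "u < 1/2" "1/2 < v" "u + v \<le> 1" | (mid_right) "u < 1/2" "1/2 < v" "1 \<le> u + v"
    by linarith
  then show ?thesis
  proof cases
    case left
    then show ?thesis using assms by (simp add: eq lo min_absorb1 power2_eq_square field_simps)
  next
    case right
    then show ?thesis using assms by (simp add: eq hi min_absorb2 power2_eq_square field_simps)
  next
    case mid_left
    then show ?thesis
      by (simp add: eq lo hi min_absorb1 min_absorb2 inner_dist_def power2_eq_square field_simps)
  next
    case mid_right
    then show ?thesis
      by (simp add: eq lo hi min_absorb1 min_absorb2 inner_dist_def power2_eq_square field_simps)
  qed
qed

lemma defect_straddle:
  assumes "u < z + of_int m" "z + of_int m < v" "v - u < 1/2"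
  shows "defect (u - z) (v - z) = - (inner_dist u v (z + of_int m))\<^sup>2"
proof -
  define k where "k = m - 1"
  have "defect (u - z) (v - z) = defect (u - z - of_int k) (v - z - of_int k)"
    using defect_shift[of "u - z - of_int k" k "v - z - of_int k"] by simp
  also have "\<dots> = - (inner_dist (u - z - of_int k) (v - z - of_int k) 1)\<^sup>2"
    using assms by (intro defect_straddle_one) (auto simp: k_def)
  also have "inner_dist (u - z - of_int k) (v - z - of_int k) 1 = inner_dist u v (z + of_int m)"
    by (simp add: inner_dist_def k_def algebra_simps)
  finally show ?thesis .
qed

lemma defect_no_straddle:
  assumes "u < v" and no_int: "\<forall>m::int. \<not> (u < z + of_int m \<and> z + of_int m < v)"
  shows "defect (u - z) (v - z) \<ge> 0"
    and "\<forall>m::int. \<not> (u < z + 1/2 + of_int m \<and> z + 1/2 + of_int m < v) \<Longrightarrow> defect (u - z) (v - z) = 0"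
proof -
  define k where "k = \<lfloor>u - z\<rfloor>"
  have "v - z - of_int k \<le> 1"
    using no_int[rule_format, of "k + 1"] assms(1) unfolding k_def by linarith
  then have "defect (u - z - of_int k) (v - z - of_int k) =
      (if u - z - of_int k < 1/2 \<and> 1/2 < v - z - of_int k
       then (inner_dist (u - z - of_int k) (v - z - of_int k) (1/2))\<^sup>2 else 0)"
    using assms(1) by (intro defect_unit_interval) (auto simp: k_def)
  moreover have "defect (u - z) (v - z) = defect (u - z - of_int k) (v - z - of_int k)"
    using defect_shift[of "u - z - of_int k" k "v - z - of_int k"] by simp
  ultimately have eq: "defect (u - z) (v - z) = (if u < z + 1/2 + of_int k \<and> z + 1/2 + of_int k < v
       then (inner_dist (u - z - of_int k) (v - z - of_int k) (1/2))\<^sup>2 else 0)"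
    by (simp add: algebra_simps)
  then show "defect (u - z) (v - z) \<ge> 0" by simp
  show "defect (u - z) (v - z) = 0" if "\<forall>m::int. \<not> (u < z + 1/2 + of_int m \<and> z + 1/2 + of_int m < v)"
    using that eq by auto
qed

lemma expectation_pmf_of_list:
  assumes wf: "pmf_of_list_wf xs"
  shows "measure_pmf.expectation (pmf_of_list xs) f = (\<Sum>k<length xs. snd (xs!k) * f (fst (xs!k)))"
proof -
  let ?A = "set (map fst xs)"
  have "measure_pmf.expectation (pmf_of_list xs) f = (\<Sum>a\<in>?A. f a * pmf (pmf_of_list xs) a)"
    using set_pmf_of_list[OF wf] by (intro integral_measure_pmf_real) auto
  also have "\<dots> = (\<Sum>a\<in>?A. f a * (\<Sum>k<length xs. if fst (xs!k) = a then snd (xs!k) else 0))"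
    by (intro sum.cong refl arg_cong2[where f="(*)"], subst pmf_pmf_of_list[OF wf],
        subst sum_list_map_filter', subst sum_list_sum_nth) (simp add: atLeast0LessThan)
  also have "\<dots> = (\<Sum>a\<in>?A. (\<Sum>k<length xs. if fst (xs!k) = a then snd (xs!k) * f (fst (xs!k)) else 0))"
    by (intro sum.cong refl) (auto simp: sum_distrib_left intro!: sum.cong)
  also have "\<dots> = (\<Sum>k<length xs. (\<Sum>a\<in>?A. if fst (xs!k) = a then snd (xs!k) * f (fst (xs!k)) else 0))"
    by (rule sum.swap)
  also have "\<dots> = (\<Sum>k<length xs. snd (xs!k) * f (fst (xs!k)))"
    by (intro sum.cong refl) (simp add: sum.delta)
  finally show ?thesis .
qed

text \<open>The points of a finite set T in [0,1) in increasing order, closed up by the first point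
  plus 1; consecutive entries delimit the arcs of the circle cut out by T.\<close>

definition cyc_pts :: "real set \<Rightarrow> real list" where
  "cyc_pts T = (let L = sorted_list_of_set T in L @ [hd L + 1])"

definition short_arcs :: "real set \<Rightarrow> bool" where
  "short_arcs T \<longleftrightarrow> (\<forall>j<card T. cyc_pts T ! Suc j - cyc_pts T ! j < 1/2)"

definition defect_sum :: "real set \<Rightarrow> real \<Rightarrow> real" where
  "defect_sum T z = (\<Sum>j<card T. defect (cyc_pts T ! j - z) (cyc_pts T ! Suc j - z))"

locale cyclic_points =
  fixes T :: "real set"
  assumes finite: "finite T" and nonempty: "T \<noteq> {}" and in_unit: "T \<subseteq> {0..<1}"
begin

abbreviation "L \<equiv> sorted_list_of_set T"
abbreviation "N \<equiv> card T"
abbreviation "P \<equiv> cyc_pts T"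

lemma card_pos: "N > 0"
  using finite nonempty by (simp add: card_gt_0_iff)

lemma pts_length: "length P = Suc N"
  by (simp add: cyc_pts_def Let_def)

lemma pts_nth: "j < N \<Longrightarrow> P ! j = L ! j"
  by (simp add: cyc_pts_def Let_def nth_append)

lemma pts_last: "P ! N = P ! 0 + 1"
  using finite nonempty card_pos by (simp add: cyc_pts_def Let_def nth_append hd_conv_nth)

lemma sorted_mem: "j < N \<Longrightarrow> L ! j \<in> T"
  using finite by (metis length_sorted_list_of_set nth_mem set_sorted_list_of_set)

lemma sorted_strict: "i < j \<Longrightarrow> j < N \<Longrightarrow> L ! i < L ! j"
  using sorted_wrt_nth_less[OF strict_sorted_list_of_set[of T]] by simp

lemma sorted_range: "j < N \<Longrightarrow> 0 \<le> L ! j \<and> L ! j < 1"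
  using sorted_mem[of j] in_unit by auto

lemma pts_strict: "j < k \<Longrightarrow> k \<le> N \<Longrightarrow> P ! j < P ! k"
  using pts_nth pts_last sorted_strict sorted_range[of j] sorted_range[of 0] card_pos
  by (cases "k = N") auto

lemma pts_mono: "j \<le> k \<Longrightarrow> k \<le> N \<Longrightarrow> P ! j \<le> P ! k"
  using pts_strict by (cases "j = k") (auto simp: less_imp_le)

lemma pts_frac_mem: "j \<le> N \<Longrightarrow> frac (P ! j) \<in> T"
proof (cases "j = N")
  case True
  have "frac (P ! 0 + 1) = P ! 0" using pts_nth[of 0] sorted_range[of 0] card_pos
    by (simp add: frac_1_eq frac_eq)
  then show ?thesis using True pts_last pts_nth[of 0] sorted_mem[of 0] card_pos by simp
next
  case False
  assume "j \<le> N"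
  then show ?thesis using False pts_nth sorted_mem sorted_range by (simp add: frac_eq)
qed

lemma pts_range: "j \<le> N \<Longrightarrow> P ! 0 \<le> P ! j \<and> P ! j \<le> P ! 0 + 1"
  using pts_mono[of 0 j] pts_mono[of j N] pts_last by simp

lemma pts_gap_free:
  assumes j: "j < N" and y: "P ! j < y" "y < P ! Suc j"
  shows "frac y \<notin> T"
proof
  assume "frac y \<in> T"
  then obtain k where k: "k < N" "P ! k = frac y"
    using finite pts_nth by (metis in_set_conv_nth length_sorted_list_of_set set_sorted_list_of_set)
  have bounds: "P ! 0 \<le> P ! j" "P ! Suc j \<le> P ! 0 + 1" "0 \<le> P ! 0" "P ! 0 < 1"
    using pts_range[of j] pts_range[of "Suc j"] j sorted_range[of 0] pts_nth[of 0] card_pos by auto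
  show False
  proof (cases "y < 1")
    case True
    then have "P ! k = y" using k y bounds by (simp add: frac_eq)
    then show False using pts_mono[of k j] pts_mono[of "Suc j"  k] j k y by (cases "k \<le> j") auto
  next
    case False
    then have "P ! k = y - 1" using k frac_floor_eq[of 1 y] y bounds by simp
    then show False using pts_range[of k] k y bounds by simp
  qed
qed

lemma translate_in_arc:
  assumes "frac y \<notin> T"
  shows "\<exists>j<N. \<exists>d::int. P ! j < y + of_int d \<and> y + of_int d < P ! Suc j"
proof -
  define d where "d = - \<lfloor>y - P ! 0\<rfloor>"
  define y' where "y' = y + of_int d"
  have y': "P ! 0 \<le> y'" "y' < P ! 0 + 1"
    unfolding y'_def d_def by linarith+
  define J where "J = {j. j \<le> N \<and> P ! j \<le> y'}"
  define j where "j = Max J"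
  have "finite J" "0 \<in> J" unfolding J_def using y' by auto
  then have "j \<in> J" unfolding j_def using Max_in by blast
  have "Suc j \<notin> J"
  proof
    assume "Suc j \<in> J"
    then have "Suc j \<le> j" unfolding j_def using Max_ge \<open>finite J\<close> by blast
    then show False by simp
  qed
  then have "j < N" "P ! j \<le> y'" "y' < P ! Suc j"
    using \<open>j \<in> J\<close> y' pts_last unfolding J_def by (auto simp: le_less)
  moreover have "P ! j \<noteq> y'"
    using pts_frac_mem[of j] \<open>j < N\<close> assms unfolding y'_def by auto
  ultimately show ?thesis unfolding y'_def by force
qed

text \<open>Since the arcs together span one turn, at most one of them contains an integer translate
  of a given point.\<close>

lemma straddle_unique:
  assumes "j1 < N" "P ! j1 < c" "c < P ! Suc j1"
    and "j2 < N" "P ! j2 < c + of_int d" "c + of_int d < P ! Suc j2"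
  shows "j1 = j2"
proof -
  have no_two: False if "a < b" "b < N" "P ! a < c1" "c1 < P ! Suc a" "P ! b < c1 + of_int e" "c1 + of_int e < P ! Suc b"
    for a b c1 and e :: int
  proof -
    have "P ! Suc a \<le> P ! b" "P ! 0 \<le> P ! a" "P ! Suc b \<le> P ! 0 + 1"
      using pts_mono[of "Suc a" b] pts_range[of a] pts_range[of "Suc b"] that by auto
    then have "0 < (of_int e :: real)" "(of_int e :: real) < 1" using that by linarith+
    then show False by simp
  qed
  show ?thesis
  proof (rule linorder_cases[of j1 j2])
    assume "j1 < j2"
    then show ?thesis using no_two[of j1 j2 c d] assms by simp
  next
    assume "j2 < j1"
    then show ?thesis using no_two[of j2 j1 "c + of_int d" "- d"] assms by simp
  qed
qed

lemma arc_within: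
  assumes "k < N" "P ! k < c" "c < P ! Suc k"
    and "p < c" "c < q" "frac p \<in> T" "frac q \<in> T"
  shows "p \<le> P ! k" "P ! Suc k \<le> q"
proof -
  show "p \<le> P ! k"
  proof (rule ccontr)
    assume "\<not> p \<le> P ! k"
    then show False using pts_gap_free[of k p] assms by simp
  qed
  show "P ! Suc k \<le> q"
  proof (rule ccontr)
    assume "\<not> P ! Suc k \<le> q"
    then show False using pts_gap_free[of k q] assms by simp
  qed
qed

end

context cyclic_points
begin

text \<open>If the antipode of z belongs to T and all arcs are short, every arc defect seen from z is
  nonpositive: an arc can only straddle a translate of z, never one of its antipode.\<close>

lemma arc_defect_truthful:
  assumes short: "short_arcs T" and anti: "antipode z \<in> T" and j: "j < N"
  shows "defect (P ! j - z) (P ! Suc j - z) \<le> 0"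
proof (cases "\<exists>m::int. P ! j < z + of_int m \<and> z + of_int m < P ! Suc j")
  case True
  then obtain m :: int where "P ! j < z + of_int m" "z + of_int m < P ! Suc j" by blast
  then show ?thesis using defect_straddle short j by (simp add: short_arcs_def)
next
  case False
  have "\<not> (P ! j < z + 1/2 + of_int m \<and> z + 1/2 + of_int m < P ! Suc j)" for m :: int
    using pts_gap_free[OF j, of "z + 1/2 + of_int m"] anti by (auto simp: antipode_def)
  then show ?thesis using defect_no_straddle(2)[of "P ! j" "P ! Suc j" z] False pts_strict[of j "Suc j"] j
    by auto
qed

lemma defect_sum_truthful:
  assumes short: "short_arcs T" and anti: "antipode z \<in> T"
  shows "defect_sum T z \<le> 0"
    and "j < N \<Longrightarrow> P ! j < z + of_int m \<Longrightarrow> z + of_int m < P ! Suc j \<Longrightarrow>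
      defect_sum T z \<le> - (inner_dist (P ! j) (P ! Suc j) (z + of_int m))\<^sup>2"
proof -
  let ?E = "\<lambda>j. defect (P ! j - z) (P ! Suc j - z)"
  have nonpos: "?E j \<le> 0" if "j < N" for j
    using arc_defect_truthful[OF short anti that] .
  show "defect_sum T z \<le> 0"
    unfolding defect_sum_def using nonpos by (intro sum_nonpos) auto
  assume j: "j < N" and m: "P ! j < z + of_int m" "z + of_int m < P ! Suc j"
  have "defect_sum T z = ?E j + (\<Sum>k\<in>{..<N} - {j}. ?E k)"
    unfolding defect_sum_def using j by (subst sum.remove[of _ j]) auto
  also have "(\<Sum>k\<in>{..<N} - {j}. ?E k) \<le> 0"
    using nonpos by (intro sum_nonpos) auto
  also have "?E j = - (inner_dist (P ! j) (P ! Suc j) (z + of_int m))\<^sup>2"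
    using defect_straddle[OF m] short j by (simp add: short_arcs_def)
  finally show "defect_sum T z \<le> - (inner_dist (P ! j) (P ! Suc j) (z + of_int m))\<^sup>2"
    by simp
qed

lemma arc_defect_nonneg:
  assumes "j < N" "\<forall>m::int. \<not> (P ! j < z + of_int m \<and> z + of_int m < P ! Suc j)"
  shows "defect (P ! j - z) (P ! Suc j - z) \<ge> 0"
  using defect_no_straddle(1)[of "P ! j" "P ! Suc j" z] pts_strict[of j "Suc j"] assms by simp

lemma defect_sum_nonneg:
  assumes "\<forall>j<N. \<forall>m::int. \<not> (P ! j < z + of_int m \<and> z + of_int m < P ! Suc j)"
  shows "defect_sum T z \<ge> 0"
  unfolding defect_sum_def using arc_defect_nonneg assms by (intro sum_nonneg) auto

lemma defect_sum_lower:
  assumes short: "short_arcs T" and j: "j < N"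
    and m: "P ! j < z + of_int m" "z + of_int m < P ! Suc j"
  shows "defect_sum T z \<ge> - (inner_dist (P ! j) (P ! Suc j) (z + of_int m))\<^sup>2"
proof -
  let ?E = "\<lambda>j. defect (P ! j - z) (P ! Suc j - z)"
  have others: "?E k \<ge> 0" if "k \<in> {..<N} - {j}" for k
  proof (rule arc_defect_nonneg)
    show "k < N" using that by simp
    show "\<forall>m'::int. \<not> (P ! k < z + of_int m' \<and> z + of_int m' < P ! Suc k)"
    proof (intro allI notI)
      fix m' :: int
      assume "P ! k < z + of_int m' \<and> z + of_int m' < P ! Suc k"
      then have k_str: "P ! k < z + of_int m + of_int (m' - m)" "z + of_int m + of_int (m' - m) < P ! Suc k"
        by simp_all
      show False using straddle_unique[OF j m \<open>k < N\<close> k_str] that by simp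
    qed
  qed
  have "defect_sum T z = ?E j + (\<Sum>k\<in>{..<N} - {j}. ?E k)"
    unfolding defect_sum_def using j by (subst sum.remove[of _ j]) auto
  moreover have "(\<Sum>k\<in>{..<N} - {j}. ?E k) \<ge> 0"
    using others by (rule sum_nonneg)
  moreover have "?E j = - (inner_dist (P ! j) (P ! Suc j) (z + of_int m))\<^sup>2"
    using defect_straddle[OF m] short j by (simp add: short_arcs_def)
  ultimately show ?thesis by linarith
qed

end

lemma frac_ne_antipode: "frac z \<noteq> antipode z"
proof
  assume "frac z = antipode z"
  then obtain m where "z + 1/2 = z + of_int m"
    unfolding antipode_def by (metis frac_eqE)
  then have "(of_int (2 * m) :: real) = 1" by simp
  then have "2 * m = 1" by (metis of_int_eq_1_iff)
  then show False by presburger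
qed

lemma far_from_antipode:
  assumes "frac p = antipode z"
  shows "1/2 \<le> \<bar>p - (z + of_int m)\<bar>"
proof -
  obtain b where "p = z + 1/2 + of_int b"
    using assms unfolding antipode_def by (metis frac_eqE)
  then have eq: "p - (z + of_int m) = of_int (b - m) + 1/2" by simp
  show ?thesis
  proof (cases "b - m \<ge> 0")
    case True
    then have "(of_int (b - m) :: real) \<ge> 0" by linarith
    then show ?thesis unfolding eq by linarith
  next
    case False
    then have "(of_int (b - m) :: real) \<le> -1" by linarith
    then show ?thesis unfolding eq by linarith
  qed
qed

lemma inner_dist_mono:
  assumes "p \<le> u" "v \<le> q"
  shows "inner_dist u v c \<le> inner_dist p q c"
  unfolding inner_dist_def using assms by (intro min.mono) auto

text \<open>T is the truthful set of antipodes (it contains the antipode of z) and T'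
  arises by removing at most that antipode and adding arbitrary points. The arc of T' containing
  z is contained in the arc of T containing z, whose ends are closer than 1/2 to z and hence
  survive in T'. So the (negative) defect seen from z can only move towards zero.\<close>

lemma defect_sum_mono:
  assumes T: "cyclic_points T" and T': "cyclic_points T'"
    and short: "short_arcs T" "short_arcs T'"
    and anti: "antipode z \<in> T" and sub: "T \<subseteq> insert (antipode z) T'"
  shows "defect_sum T z \<le> defect_sum T' z"
proof -
  interpret A: cyclic_points T by (fact T)
  interpret B: cyclic_points T' by (fact T')
  let ?P = "cyc_pts T" and ?Q = "cyc_pts T'"
  show ?thesis
  proof (cases "\<exists>k<card T'. \<exists>m::int. ?Q ! k < z + of_int m \<and> z + of_int m < ?Q ! Suc k")
    case False
    then show ?thesis
      using A.defect_sum_truthful(1)[OF short(1) anti] B.defect_sum_nonneg[of z] by auto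
  next
    case True
    then obtain k and m' :: int where k: "k < card T'"
      and c': "?Q ! k < z + of_int m'" "z + of_int m' < ?Q ! Suc k" by blast
    have lower: "defect_sum T' z \<ge> - (inner_dist (?Q ! k) (?Q ! Suc k) (z + of_int m'))\<^sup>2"
      by (rule B.defect_sum_lower[OF short(2) k c'])
    have "frac z \<notin> T'" using B.pts_gap_free[OF k c'] by simp
    then have "frac z \<notin> T" using sub frac_ne_antipode[of z] by blast
    then obtain j and m :: int where j: "j < card T"
      and c: "?P ! j < z + of_int m" "z + of_int m < ?P ! Suc j"
      using A.translate_in_arc by blast
    have upper: "defect_sum T z \<le> - (inner_dist (?P ! j) (?P ! Suc j) (z + of_int m))\<^sup>2"
      by (rule A.defect_sum_truthful(2)[OF short(1) anti j c])
    (* The ends of the truthful arc lie within distance 1/2 of z, so they are not the antipode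
       of z and survive the deviation; shifted by m - m' they enclose the arc of T' around z. *)
    define D where "D = m - m'"
    have survives: "frac (p - of_int D) \<in> T'" if "frac p \<in> T" "\<bar>p - (z + of_int m)\<bar> < 1/2" for p
    proof -
      have "frac p \<noteq> antipode z"
      proof
        assume "frac p = antipode z"
        from far_from_antipode[OF this, of m] that(2) show False by linarith
      qed
      then have "frac p \<in> T'" using that(1) sub by blast
      moreover have "frac (p - of_int D) = frac p"
        using frac_add_of_int_right[of p "- D"] by simp
      ultimately show ?thesis by simp
    qed
    have "?P ! Suc j - ?P ! j < 1/2" using short(1) j by (simp add: short_arcs_def)
    then have "frac (?P ! j - of_int D) \<in> T'" "frac (?P ! Suc j - of_int D) \<in> T'"
      using survives A.pts_frac_mem[of j] A.pts_frac_mem[of "Suc j"] j c by auto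
    moreover have "?P ! j - of_int D < z + of_int m'" "z + of_int m' < ?P ! Suc j - of_int D"
      using c by (simp_all add: D_def)
    ultimately have "?P ! j - of_int D \<le> ?Q ! k" "?Q ! Suc k \<le> ?P ! Suc j - of_int D"
      using B.arc_within[OF k c'] by blast+
    then have "inner_dist (?Q ! k) (?Q ! Suc k) (z + of_int m')
        \<le> inner_dist (?P ! j - of_int D) (?P ! Suc j - of_int D) (z + of_int m')"
      by (rule inner_dist_mono)
    also have "\<dots> = inner_dist (?P ! j) (?P ! Suc j) (z + of_int m)"
      by (simp add: inner_dist_def D_def algebra_simps)
    finally have "inner_dist (?Q ! k) (?Q ! Suc k) (z + of_int m')
        \<le> inner_dist (?P ! j) (?P ! Suc j) (z + of_int m)" .
    moreover have "0 \<le> inner_dist (?Q ! k) (?Q ! Suc k) (z + of_int m')"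
      using c' by (simp add: inner_dist_def)
    ultimately have "(inner_dist (?Q ! k) (?Q ! Suc k) (z + of_int m'))\<^sup>2
        \<le> (inner_dist (?P ! j) (?P ! Suc j) (z + of_int m))\<^sup>2"
      by (intro power_mono)
    then show ?thesis using upper lower by linarith
  qed
qed

definition antipodes :: "nat \<Rightarrow> (nat \<Rightarrow> real) \<Rightarrow> real set" where
  "antipodes n x = (\<lambda>i. antipode (x i)) ` {..<n}"

lemma cyclic_points_antipodes: "n > 0 \<Longrightarrow> cyclic_points (antipodes n x)"
  unfolding cyclic_points_def antipodes_def antipode_def using frac_lt_1 by auto

lemma rc_points_eq: "rc_points n x = cyc_pts (antipodes n x)"
  by (simp add: rc_points_def cyc_pts_def antipodes_def)

lemma antipodes_update:
  "antipodes n x \<subseteq> insert (antipode (x i)) (antipodes n (x(i := v)))"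
  unfolding antipodes_def by force

lemma tent_uminus: "tent (- w) = tent w"
proof (cases "w \<in> \<int>")
  case True
  then have "frac w = 0" by (simp add: frac_eq_0_iff)
  then show ?thesis using True by (simp add: tent_def frac_neg \<open>frac w = 0\<close>)
qed (simp add: tent_def frac_neg min.commute)

lemma circ_dist_tent: "circ_dist z (frac w) = tent (w - z)"
proof -
  have "circ_dist z (frac w) = tent (z - frac w)"
    by (simp add: circ_dist_def tent_def)
  also have "z - frac w = - (w - z) + of_int \<lfloor>w\<rfloor>"
    by (simp add: frac_def)
  finally show ?thesis by (simp only: tent_shift tent_uminus)
qed

lemma cost_formula:
  assumes n: "n > 0"
  shows "cost (rc n x) z = 1/4 + defect_sum (antipodes n x) z"
proof -
  interpret cyclic_points "antipodes n x" using cyclic_points_antipodes[OF n] .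
  have arcs: "rc_arcs n x = map (\<lambda>j. (frac ((P ! j + P ! Suc j) / 2), P ! Suc j - P ! j)) [0..<N]"
    unfolding rc_arcs_def rc_points_eq Let_def pts_length by simp
  have wf: "pmf_of_list_wf (rc_arcs n x)"
  proof (rule pmf_of_list_wfI)
    fix w assume "w \<in> set (map snd (rc_arcs n x))"
    then show "w \<ge> 0" unfolding arcs using pts_strict[of _ "Suc _"] by (auto simp: less_imp_le)
  next
    have "sum_list (map snd (rc_arcs n x)) = (\<Sum>j<N. P ! Suc j - P ! j)"
      unfolding arcs by (simp add: sum_list_sum_nth atLeast0LessThan)
    also have "\<dots> = 1" using sum_lessThan_telescope[of "\<lambda>j. P ! j" N] pts_last by simp
    finally show "sum_list (map snd (rc_arcs n x)) = 1" .
  qed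
  have "cost (rc n x) z = (\<Sum>j<N. (P ! Suc j - P ! j) * circ_dist z (frac ((P ! j + P ! Suc j) / 2)))"
    unfolding cost_def rc_def expectation_pmf_of_list[OF wf] by (simp add: arcs)
  also have "\<dots> = (\<Sum>j<N. defect (P ! j - z) (P ! Suc j - z) +
      (tent_prim (P ! Suc j - z) - tent_prim (P ! j - z)))"
  proof (intro sum.cong refl)
    fix j
    have mid: "(P ! j + P ! Suc j) / 2 - z = ((P ! j - z) + (P ! Suc j - z)) / 2"
      by (simp add: field_simps)
    show "(P ! Suc j - P ! j) * circ_dist z (frac ((P ! j + P ! Suc j) / 2)) =
        defect (P ! j - z) (P ! Suc j - z) + (tent_prim (P ! Suc j - z) - tent_prim (P ! j - z))"
      unfolding circ_dist_tent mid defect_def by (simp add: algebra_simps)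
  qed
  also have "\<dots> = defect_sum (antipodes n x) z + (tent_prim (P ! N - z) - tent_prim (P ! 0 - z))"
    unfolding defect_sum_def
    using sum_lessThan_telescope[of "\<lambda>j. tent_prim (P ! j - z)" N] by (simp add: sum.distrib)
  also have "tent_prim (P ! N - z) = tent_prim (P ! 0 - z) + 1/4"
    using tent_prim_shift[of "P ! 0 - z" 1] pts_last by (simp add: algebra_simps)
  finally show ?thesis by simp
qed

text \<open>If the agents are not on one semicircle, every arc between consecutive antipodes is
  shorter than 1/2: otherwise all agents would lie in the half circle opposite that arc.\<close>

lemma short_arcs_antipodes:
  assumes not_semi: "\<not> on_semicircle n x" and n: "n > 0"
  shows "short_arcs (antipodes n x)"
  unfolding short_arcs_def
proof (intro allI impI, rule ccontr)
  interpret cyclic_points "antipodes n x" using cyclic_points_antipodes[OF n] .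
  fix j assume j: "j < N" and "\<not> P ! Suc j - P ! j < 1/2"
  then have long: "P ! Suc j - P ! j \<ge> 1/2" by simp
  define c where "c = P ! Suc j - 1/2"
  have "frac (x k - c) \<le> 1/2" if k: "k < n" for k
  proof (rule ccontr)
    assume far: "\<not> frac (x k - c) \<le> 1/2"
    define y where "y = P ! Suc j + frac (x k - c) - 1"
    have "y = (x k + 1/2) + of_int (- \<lfloor>x k - c\<rfloor> - 1)"
      unfolding y_def c_def frac_def by simp
    then have "frac y = antipode (x k)"
      unfolding antipode_def by (simp only: frac_add_of_int_right)
    moreover have "P ! j < y" "y < P ! Suc j"
      using long far frac_lt_1[of "x k - c"] unfolding y_def by auto
    ultimately show False
      using pts_gap_free[OF j] k unfolding antipodes_def by auto
  qed
  then show False using not_semi unfolding on_semicircle_def by blast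
qed

theorem mainTheorem17:
  fixes n :: nat and x :: "nat \<Rightarrow> real" and i :: nat and xi' :: real
  assumes "\<not> on_semicircle n x"
    and "i < n"
    and "\<not> on_semicircle n (x(i := xi'))"
  shows "cost (rc n x) (x i) \<le> cost (rc n (x(i := xi'))) (x i)"
proof -
  have n: "n > 0" using assms(2) by simp
  have "defect_sum (antipodes n x) (x i) \<le> defect_sum (antipodes n (x(i := xi'))) (x i)"
  proof (rule defect_sum_mono)
    show "cyclic_points (antipodes n x)" "cyclic_points (antipodes n (x(i := xi')))"
      using cyclic_points_antipodes[OF n] by blast+
    show "short_arcs (antipodes n x)" "short_arcs (antipodes n (x(i := xi')))"
      using short_arcs_antipodes[OF _ n] assms(1,3) by blast+
    show "antipode (x i) \<in> antipodes n x" using assms(2) by (simp add: antipodes_def)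
    show "antipodes n x \<subseteq> insert (antipode (x i)) (antipodes n (x(i := xi')))"
      by (rule antipodes_update)
  qed
  then show ?thesis using cost_formula[OF n] by simp
qed

end
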